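(* Let $V$ be a module over a commutative ring $k$, let $[\cdot,\cdot]:V\times V\to V$ be a bilinear map such that $(V,[\cdot,\cdot])$ is a Lie algebra (i.e. $[x,x]=0$ and $\circlearrowleft_{x,y,z}[x,[y,z]]=0$ for all $x,y,z\in V$), and let $\alpha:V\to V$ be a linear map. Then: (1) if $(V,[\cdot,\cdot],\alpha)$ is a Hom-Lie algebra of type $I_2$, it is also a Hom-Lie algebra of type $I_1$; (2) if $(V,[\cdot,\cdot],\alpha)$ is a Hom-Lie algebra of type $II_2$, it is also a Hom-Lie algebra of type $II_1$.
   Context: For $x,y,z\in V$, $\circlearrowleft_{x,y,z} F(x,y,z)$ denotes $F(x,y,z)+F(y,z,x)+F(z,x,y)$. A triple $(V,[\cdot,\cdot],\alpha)$ with $V$ a $k$-module, $[\cdot,\cdot]$ bilinear with $[x,x]=0$ for all $x$, and $\alpha$ linear, is a Hom-Lie algebra of a given type if the corresponding identity holds for all $x,y,z\in V$: type $I_1$: $\circlearrowleft_{x,y,z}[\alpha(x),[y,z]]=0$; type $I_2$: $\circlearrowleft_{x,y,z}[x,[\alpha(y),z]]=0$; type $I_3$: $\circlearrowleft_{x,y,z}[x,[y,\alpha(z)]]=0$; type $II$: $\circlearrowleft_{x,y,z}[x,\alpha([y,z])]=0$; type $II_1$: $\circlearrowleft_{x,y,z}[x,[\alpha(y),\alpha(z)]]=0$; type $II_2$: $\circlearrowleft_{x,y,z}[\alpha(x),[y,\alpha(z)]]=0$; type $II_3$: $\circlearrowleft_{x,y,z}[\alpha(x),[\alpha(y),z]]=0$.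 *)

theory Defs
  imports Main "HOL.Modules"
begin

definition cyc :: "('v \<Rightarrow> 'v \<Rightarrow> 'v \<Rightarrow> 'w::plus) \<Rightarrow> 'v \<Rightarrow> 'v \<Rightarrow> 'v \<Rightarrow> 'w" where
  "cyc F x y z = F x y z + F y z x + F z x y"

definition bilinear_map :: "('k::comm_ring_1 \<Rightarrow> 'v::ab_group_add \<Rightarrow> 'v) \<Rightarrow> ('v \<Rightarrow> 'v \<Rightarrow> 'v) \<Rightarrow> bool" where
  "bilinear_map scale br \<longleftrightarrow>
     (\<forall>y. module_hom scale scale (\<lambda>x. br x y)) \<and> (\<forall>x. module_hom scale scale (\<lambda>y. br x y))"

definition alternating :: "('v \<Rightarrow> 'v \<Rightarrow> 'v::zero) \<Rightarrow> bool" where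
  "alternating br \<longleftrightarrow> (\<forall>x. br x x = 0)"

definition is_lie_algebra :: "('k::comm_ring_1 \<Rightarrow> 'v::ab_group_add \<Rightarrow> 'v) \<Rightarrow> ('v \<Rightarrow> 'v \<Rightarrow> 'v) \<Rightarrow> bool" where
  "is_lie_algebra scale br \<longleftrightarrow> bilinear_map scale br \<and> alternating br \<and>
     (\<forall>x y z. cyc (\<lambda>x y z. br x (br y z)) x y z = 0)"

definition hom_lie_I1 :: "('v \<Rightarrow> 'v \<Rightarrow> 'v::ab_group_add) \<Rightarrow> ('v \<Rightarrow> 'v) \<Rightarrow> bool" where
  "hom_lie_I1 br \<alpha> \<longleftrightarrow> alternating br \<and> (\<forall>x y z. cyc (\<lambda>x y z. br (\<alpha> x) (br y z)) x y z = 0)"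

definition hom_lie_I2 :: "('v \<Rightarrow> 'v \<Rightarrow> 'v::ab_group_add) \<Rightarrow> ('v \<Rightarrow> 'v) \<Rightarrow> bool" where
  "hom_lie_I2 br \<alpha> \<longleftrightarrow> alternating br \<and> (\<forall>x y z. cyc (\<lambda>x y z. br x (br (\<alpha> y) z)) x y z = 0)"

definition hom_lie_II1 :: "('v \<Rightarrow> 'v \<Rightarrow> 'v::ab_group_add) \<Rightarrow> ('v \<Rightarrow> 'v) \<Rightarrow> bool" where
  "hom_lie_II1 br \<alpha> \<longleftrightarrow> alternating br \<and> (\<forall>x y z. cyc (\<lambda>x y z. br x (br (\<alpha> y) (\<alpha> z))) x y z = 0)"

definition hom_lie_II2 :: "('v \<Rightarrow> 'v \<Rightarrow> 'v::ab_group_add) \<Rightarrow> ('v \<Rightarrow> 'v) \<Rightarrow> bool" where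
  "hom_lie_II2 br \<alpha> \<longleftrightarrow> alternating br \<and> (\<forall>x y z. cyc (\<lambda>x y z. br (\<alpha> x) (br y (\<alpha> z))) x y z = 0)"

end

theory Submission
  imports Defs
begin

(* Both implications rest on one rearrangement of the Jacobi identity,
     [a,[b,c]] = [b,[a,c]] - [c,[a,b]],
   valid for any biadditive alternating bracket satisfying Jacobi.
   Applied termwise with a = alpha x it rewrites the type I_1 cyclic sum as a
   difference of two type I_2 cyclic sums (with arguments permuted); applied
   with c = x, a = alpha y, b = alpha z it rewrites the type II_1 cyclic sum as
   a difference of two type II_2 cyclic sums.  Hence vanishing of the latter
   forces vanishing of the former. *)

lemma cyc_diff:
  fixes F G :: "'v \<Rightarrow> 'v \<Rightarrow> 'v \<Rightarrow> 'w::ab_group_add"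
  shows "cyc (\<lambda>x y z. F x y z - G x y z) x y z = cyc F x y z - cyc G x y z"
  unfolding cyc_def by (simp add: algebra_simps)

lemma cyc_rotate:
  fixes F :: "'v \<Rightarrow> 'v \<Rightarrow> 'v \<Rightarrow> 'w::ab_semigroup_add"
  shows "cyc (\<lambda>x y z. F z x y) x y z = cyc F x y z"
  unfolding cyc_def by (simp add: ac_simps)

lemma cyc_swap:
  fixes F :: "'v \<Rightarrow> 'v \<Rightarrow> 'v \<Rightarrow> 'w::ab_semigroup_add"
  shows "cyc (\<lambda>x y z. F y x z) x y z = cyc F y x z"
  unfolding cyc_def by (simp add: ac_simps)

locale lie_bracket =
  fixes br :: "'v::ab_group_add \<Rightarrow> 'v \<Rightarrow> 'v"
  assumes add_left: "br (a + b) c = br a c + br b c"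
    and add_right: "br a (b + c) = br a b + br a c"
    and alternating: "br a a = 0"
    and jacobi: "br a (br b c) + br b (br c a) + br c (br a b) = 0"
begin

lemma zero_right: "br a 0 = 0"
  using add_right[of a 0 0] by simp

lemma minus_right: "br a (- b) = - br a b"
proof -
  have "br a b + br a (- b) = 0"
    using add_right[of a b "- b"] by (simp add: zero_right)
  then show ?thesis by (simp add: add_eq_0_iff)
qed

lemma anticommute: "br a b = - br b a"
proof -
  have "br (a + b) (a + b) = (br a a + br a b) + (br b a + br b b)"
    by (simp only: add_left add_right ac_simps)
  then have "br a b + br b a = 0" by (simp add: alternating)
  then show ?thesis by (simp add: eq_neg_iff_add_eq_0)
qed

lemma jacobi_rearranged: "br a (br b c) = br b (br a c) - br c (br a b)"
proof -
  have "br b (br c a) = - br b (br a c)"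
    by (subst anticommute) (simp add: minus_right)
  with jacobi[of a b c] show ?thesis
    by (simp add: algebra_simps eq_neg_iff_add_eq_0)
qed

lemma cyc_I1_eq_I2:
  fixes \<alpha> :: "'v \<Rightarrow> 'v"
  defines "F \<equiv> \<lambda>x y z. br x (br (\<alpha> y) z)"
  shows "cyc (\<lambda>x y z. br (\<alpha> x) (br y z)) x y z = cyc F y x z - cyc F x y z"
proof -
  have "cyc (\<lambda>x y z. br (\<alpha> x) (br y z)) x y z
      = cyc (\<lambda>x y z. F y x z - F z x y) x y z"
    unfolding F_def by (subst jacobi_rearranged) (rule refl)
  also have "\<dots> = cyc F y x z - cyc F x y z"
    by (simp only: cyc_diff cyc_swap[of F] cyc_rotate[of F])
  finally show ?thesis .
qed

lemma cyc_II1_eq_II2: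
  fixes \<alpha> :: "'v \<Rightarrow> 'v"
  defines "G \<equiv> \<lambda>x y z. br (\<alpha> x) (br y (\<alpha> z))"
  shows "cyc (\<lambda>x y z. br x (br (\<alpha> y) (\<alpha> z))) x y z = cyc G y x z - cyc G x y z"
proof -
  have "cyc (\<lambda>x y z. br x (br (\<alpha> y) (\<alpha> z))) x y z
      = cyc (\<lambda>x y z. G y x z - G z x y) x y z"
    unfolding G_def by (subst jacobi_rearranged) (rule refl)
  also have "\<dots> = cyc G y x z - cyc G x y z"
    by (simp only: cyc_diff cyc_swap[of G] cyc_rotate[of G])
  finally show ?thesis .
qed

lemma hom_lie_I2_imp_I1:
  assumes "hom_lie_I2 br \<alpha>"
  shows "hom_lie_I1 br \<alpha>"
  using assms cyc_I1_eq_I2[of \<alpha>] unfolding hom_lie_I2_def hom_lie_I1_def by simp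

lemma hom_lie_II2_imp_II1:
  assumes "hom_lie_II2 br \<alpha>"
  shows "hom_lie_II1 br \<alpha>"
  using assms cyc_II1_eq_II2[of \<alpha>] unfolding hom_lie_II2_def hom_lie_II1_def by simp

end

text \<open>The bracket of a Lie algebra over a commutative ring is a Lie bracket
  in the above sense; only additivity of the bilinear map is retained.\<close>

lemma lie_algebra_imp_lie_bracket:
  assumes "is_lie_algebra scale br"
  shows "lie_bracket br"
proof
  have bil: "bilinear_map scale br" and alt: "alternating br"
    and jac: "\<And>x y z. cyc (\<lambda>x y z. br x (br y z)) x y z = 0"
    using assms unfolding is_lie_algebra_def by auto
  show "br (a + b) c = br a c + br b c" for a b c
    using bil unfolding bilinear_map_def by (meson module_hom.add)
  show "br a (b + c) = br a b + br a c" for a b c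
    using bil unfolding bilinear_map_def by (meson module_hom.add)
  show "br a a = 0" for a
    using alt unfolding alternating_def by simp
  show "br a (br b c) + br b (br c a) + br c (br a b) = 0" for a b c
    using jac[of a b c] unfolding cyc_def .
qed

theorem proposition1p1:
  fixes scale :: "'k::comm_ring_1 \<Rightarrow> 'v::ab_group_add \<Rightarrow> 'v"
    and br :: "'v \<Rightarrow> 'v \<Rightarrow> 'v"
    and \<alpha> :: "'v \<Rightarrow> 'v"
  assumes "module scale"
    and "is_lie_algebra scale br"
    and "module_hom scale scale \<alpha>"
  shows "(hom_lie_I2 br \<alpha> \<longrightarrow> hom_lie_I1 br \<alpha>) \<and> (hom_lie_II2 br \<alpha> \<longrightarrow> hom_lie_II1 br \<alpha>)"
proof -
  interpret lie_bracket br
    using lie_algebra_imp_lie_bracket[OF assms(2)] .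
  show ?thesis
    using hom_lie_I2_imp_I1 hom_lie_II2_imp_II1 by blast
qed

end
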